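(* Let $G$ be a group acting geometrically (i.e.\ properly and cocompactly by isometries) on a CAT(0) space $X$. For $g\in G$, the fixed-point set $\mathcal{F}_g=\{\alpha\in\partial X\mid g\alpha=\alpha\}$ is nonempty if and only if the centralizer $Z_g=\{v\in G\mid gv=vg\}$ is infinite.
   Context: $\partial X$ denotes the visual boundary of the (necessarily proper) CAT(0) space $X$: asymptotic classes of geodesic rays with the cone topology, so that $X\cup\partial X$ is a compactification of $X$. An isometry $g$ acts on $\partial X$ by $g(\xi(\infty))=(g\circ\xi)(\infty)$. *)

theory Defs
  imports "HOL-Analysis.Analysis" "HOL-Algebra.Group_Action"
begin

definition geodesic_segment :: "(real \<Rightarrow> 'a::metric_space) \<Rightarrow> 'a \<Rightarrow> 'a \<Rightarrow> bool" where
  "geodesic_segment c x y \<longleftrightarrow> c 0 = x \<and> c (dist x y) = y \<and>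
     (\<forall>s\<in>{0..dist x y}. \<forall>t\<in>{0..dist x y}. dist (c s) (c t) = \<bar>s - t\<bar>)"

definition geodesic_space :: "'a::metric_space itself \<Rightarrow> bool" where
  "geodesic_space _ \<longleftrightarrow> (\<forall>x y::'a. \<exists>c. geodesic_segment c x y)"

definition proper_space :: "'a::metric_space itself \<Rightarrow> bool" where
  "proper_space _ \<longleftrightarrow> (\<forall>(x::'a) r. compact (cball x r))"

text \<open>Point of the Euclidean comparison segment [a',b'] (of length L) at distance t from a'.\<close>
definition cmp_pt :: "complex \<Rightarrow> complex \<Rightarrow> real \<Rightarrow> real \<Rightarrow> complex" where
  "cmp_pt a' b' L t = a' + complex_of_real (t / L) * (b' - a')"

definition CAT0_space :: "'a::metric_space itself \<Rightarrow> bool" where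
  "CAT0_space T \<longleftrightarrow> geodesic_space T \<and>
    (\<forall>(x::'a) y z c1 c2 c3 x' y' z'.
       geodesic_segment c1 x y \<and> geodesic_segment c2 y z \<and> geodesic_segment c3 z x \<and>
       dist x' y' = dist x y \<and> dist y' z' = dist y z \<and> dist z' x' = dist z x \<longrightarrow>
       (let S = {(c1, x', y', dist x y), (c2, y', z', dist y z), (c3, z', x', dist z x)} in
        \<forall>(c, a, b, L)\<in>S. \<forall>(c', a2, b2, L2)\<in>S. \<forall>s\<in>{0..L}. \<forall>t\<in>{0..L2}.
          dist (c s) (c' t) \<le> dist (cmp_pt a b L s) (cmp_pt a2 b2 L2 t)))"

definition geodesic_ray :: "(real \<Rightarrow> 'a::metric_space) \<Rightarrow> bool" where
  "geodesic_ray \<xi> \<longleftrightarrow> (\<forall>s\<ge>0. \<forall>t\<ge>0. dist (\<xi> s) (\<xi> t) = \<bar>s - t\<bar>)"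

definition asymptotic :: "(real \<Rightarrow> 'a::metric_space) \<Rightarrow> (real \<Rightarrow> 'a) \<Rightarrow> bool" where
  "asymptotic \<xi> \<eta> \<longleftrightarrow> (\<exists>C. \<forall>t\<ge>0. dist (\<xi> t) (\<eta> t) \<le> C)"

definition visual_boundary :: "'a::metric_space itself \<Rightarrow> (real \<Rightarrow> 'a) set set" where
  "visual_boundary _ = {{\<eta>. geodesic_ray \<eta> \<and> asymptotic \<xi> \<eta>} | \<xi>. geodesic_ray \<xi>}"

definition bd_act :: "('a \<Rightarrow> 'a) \<Rightarrow> (real \<Rightarrow> 'a) set \<Rightarrow> (real \<Rightarrow> 'a) set" where
  "bd_act f \<alpha> = (\<lambda>\<xi>. f \<circ> \<xi>) ` \<alpha>"

definition boundary_fixed_set :: "('a::metric_space \<Rightarrow> 'a) \<Rightarrow> (real \<Rightarrow> 'a) set set" where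
  "boundary_fixed_set f = {\<alpha> \<in> visual_boundary TYPE('a). bd_act f \<alpha> = \<alpha>}"

definition isometric_action :: "('g, 'b) monoid_scheme \<Rightarrow> ('g \<Rightarrow> 'a::metric_space \<Rightarrow> 'a) \<Rightarrow> bool" where
  "isometric_action G \<phi> \<longleftrightarrow> group_action G UNIV \<phi> \<and>
     (\<forall>g\<in>carrier G. \<forall>x y. dist (\<phi> g x) (\<phi> g y) = dist x y)"

text \<open>Proper action (Bridson--Haefliger I.8.2).\<close>
definition proper_action :: "('g, 'b) monoid_scheme \<Rightarrow> ('g \<Rightarrow> 'a::metric_space \<Rightarrow> 'a) \<Rightarrow> bool" where
  "proper_action G \<phi> \<longleftrightarrow> (\<forall>x. \<exists>r>0.
     finite {g \<in> carrier G. \<phi> g ` ball x r \<inter> ball x r \<noteq> {}})"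

definition cocompact_action :: "('g, 'b) monoid_scheme \<Rightarrow> ('g \<Rightarrow> 'a::metric_space \<Rightarrow> 'a) \<Rightarrow> bool" where
  "cocompact_action G \<phi> \<longleftrightarrow> (\<exists>K. compact K \<and> (\<Union>g\<in>carrier G. \<phi> g ` K) = UNIV)"

definition geometric_action :: "('g, 'b) monoid_scheme \<Rightarrow> ('g \<Rightarrow> 'a::metric_space \<Rightarrow> 'a) \<Rightarrow> bool" where
  "geometric_action G \<phi> \<longleftrightarrow> isometric_action G \<phi> \<and> proper_action G \<phi> \<and> cocompact_action G \<phi>"

definition centralizer_of :: "('g, 'b) monoid_scheme \<Rightarrow> 'g \<Rightarrow> 'g set" where
  "centralizer_of G g = {v \<in> carrier G. g \<otimes>\<^bsub>G\<^esub> v = v \<otimes>\<^bsub>G\<^esub> g}"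

end

theory Submission
  imports Defs "HOL-Library.Diagonal_Subsequence"
begin

(* If g fixes the endpoint of a geodesic ray \<xi>, it moves every \<xi>(t) by at most some C.
   By cocompactness \<xi>(n) lies within D of some h\<^sub>n x\<^sub>0, so the conjugates h\<^sub>n\<^sup>-\<^sup>1 g h\<^sub>n move x\<^sub>0
   by at most 2D + C and, by properness, form a finite set; as there are infinitely many
   distinct h\<^sub>n, infinitely many share one conjugate h\<^sub>0\<^sup>-\<^sup>1 g h\<^sub>0, and the elements h\<^sub>0 h\<^sub>n\<^sup>-\<^sup>1 are
   then infinitely many elements of the centralizer.
   Conversely, by properness an infinite centralizer has an unbounded orbit z\<^sub>n x\<^sub>0, along which
   g has the constant displacement d(x\<^sub>0, g x\<^sub>0). Displacement is convex along geodesics of a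
   CAT(0) space, so g moves no point of the segments [x\<^sub>0, z\<^sub>n x\<^sub>0] further than that, and a
   pointwise limit of these segments (Arzela-Ascoli) is a geodesic ray with bounded
   displacement, whose endpoint is therefore fixed by g. *)

section \<open>Isometric group actions\<close>

lemma (in group_action) inv_action_cancel:
  assumes "g \<in> carrier G" "x \<in> E"
  shows "\<phi> (inv g) (\<phi> g x) = x"
proof -
  interpret G: group G using group_hom unfolding group_hom_def by blast
  have "\<phi> (inv g) (\<phi> g x) = \<phi> (inv g \<otimes> g) x"
    using assms by (simp only: composition_rule G.inv_closed)
  also have "\<dots> = \<phi> \<one> x" using assms by simp
  also have "\<dots> = x" using assms by (simp flip: id_eq_one)
  finally show ?thesis .
qed

lemma isometric_actionD:
  assumes "isometric_action G \<phi>" "g \<in> carrier G"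
  shows "dist (\<phi> g u) (\<phi> g v) = dist u v" "surj (\<phi> g)"
proof -
  show "dist (\<phi> g u) (\<phi> g v) = dist u v"
    using assms unfolding isometric_action_def by blast
  have "group_action G UNIV \<phi>"
    using assms(1) unfolding isometric_action_def by blast
  from group_action.surj_prop[OF this assms(2)] show "surj (\<phi> g)" .
qed

lemma isometric_action_conjugate_displacement:
  fixes G (structure) and \<phi> :: "'g \<Rightarrow> 'a::metric_space \<Rightarrow> 'a"
  assumes "isometric_action G \<phi>" "g \<in> carrier G" "h \<in> carrier G"
  shows "dist (\<phi> (inv h \<otimes> g \<otimes> h) x) x = dist (\<phi> g (\<phi> h x)) (\<phi> h x)"
proof -
  interpret group_action G UNIV \<phi>
    using assms(1) unfolding isometric_action_def by blast
  interpret G: group G using group_hom unfolding group_hom_def by blast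
  have "dist (\<phi> (inv h \<otimes> g \<otimes> h) x) x = dist (\<phi> (inv h) (\<phi> g (\<phi> h x))) (\<phi> (inv h) (\<phi> h x))"
    using assms(2,3) by (simp add: composition_rule inv_action_cancel)
  also have "\<dots> = dist (\<phi> g (\<phi> h x)) (\<phi> h x)"
    using assms(1,3) by (simp add: isometric_actionD)
  finally show ?thesis .
qed

lemma isometric_action_commuting_displacement:
  fixes G (structure) and \<phi> :: "'g \<Rightarrow> 'a::metric_space \<Rightarrow> 'a"
  assumes "isometric_action G \<phi>" "g \<in> carrier G" "z \<in> centralizer_of G g"
  shows "dist (\<phi> z x) (\<phi> g (\<phi> z x)) = dist x (\<phi> g x)"
proof -
  have ga: "group_action G UNIV \<phi>" using assms(1) unfolding isometric_action_def by blast
  have z: "z \<in> carrier G" "g \<otimes> z = z \<otimes> g"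
    using assms(3) unfolding centralizer_of_def by auto
  then have "\<phi> g (\<phi> z x) = \<phi> z (\<phi> g x)"
    using assms(2) group_action.composition_rule[OF ga] by (metis UNIV_I)
  then show ?thesis using assms(1) z(1) by (simp add: isometric_actionD)
qed

lemma proper_action_locally_finite_orbit:
  fixes G (structure) and \<phi> :: "'g \<Rightarrow> 'a::metric_space \<Rightarrow> 'a"
  assumes "group_action G UNIV \<phi>" "proper_action G \<phi>"
  shows "\<exists>r>0. finite {h \<in> carrier G. \<phi> h x0 \<in> ball z r}"
proof -
  interpret group_action G UNIV \<phi> by fact
  interpret G: group G using group_hom unfolding group_hom_def by blast
  obtain r where "r > 0"
    and fin: "finite {f \<in> carrier G. \<phi> f ` ball z r \<inter> ball z r \<noteq> {}}" (is "finite ?F")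
    using assms(2) unfolding proper_action_def by blast
  have "finite {h \<in> carrier G. \<phi> h x0 \<in> ball z r}" (is "finite ?A")
  proof (cases "?A = {}")
    case False
    then obtain h1 where h1: "h1 \<in> ?A" by blast
    have "?A \<subseteq> (\<lambda>f. f \<otimes> h1) ` ?F"
    proof
      fix h assume h: "h \<in> ?A"
      have "\<phi> (h \<otimes> inv h1) (\<phi> h1 x0) = \<phi> h x0"
        using h h1 by (simp add: composition_rule inv_action_cancel)
      then have "h \<otimes> inv h1 \<in> ?F" using h h1 by force
      moreover have "h = (h \<otimes> inv h1) \<otimes> h1" using h h1 by (simp add: G.m_assoc)
      ultimately show "h \<in> (\<lambda>f. f \<otimes> h1) ` ?F" by blast
    qed
    then show ?thesis using fin finite_subset by blast
  qed (simp only: finite.emptyI)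
  with \<open>r > 0\<close> show ?thesis by blast
qed

lemma proper_action_finite_displacement:
  fixes G (structure) and \<phi> :: "'g \<Rightarrow> 'a::metric_space \<Rightarrow> 'a"
  assumes "group_action G UNIV \<phi>" "proper_action G \<phi>" "proper_space TYPE('a)"
  shows "finite {h \<in> carrier G. dist (\<phi> h x0) x0 \<le> R}"
proof -
  obtain r where r: "\<And>z. r z > 0" "\<And>z. finite {h \<in> carrier G. \<phi> h x0 \<in> ball z (r z)}"
    using proper_action_locally_finite_orbit[OF assms(1,2)] by metis
  obtain T where "finite T" and T: "cball x0 R \<subseteq> (\<Union>z\<in>T. ball z (r z))"
  proof (rule compactE_image[of "cball x0 R" "cball x0 R" "\<lambda>z. ball z (r z)"])
    show "compact (cball x0 R)" using assms(3) unfolding proper_space_def by blast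
    show "cball x0 R \<subseteq> (\<Union>z\<in>cball x0 R. ball z (r z))" using r(1) by force
  qed (auto intro: that)
  have "{h \<in> carrier G. dist (\<phi> h x0) x0 \<le> R} \<subseteq> (\<Union>z\<in>T. {h \<in> carrier G. \<phi> h x0 \<in> ball z (r z)})"
    using T by (force simp: dist_commute)
  then show ?thesis using r(2) \<open>finite T\<close> by (meson finite_UN_I finite_subset)
qed

lemma proper_action_infinite_subset_unbounded:
  fixes G (structure) and \<phi> :: "'g \<Rightarrow> 'a::metric_space \<Rightarrow> 'a"
  assumes "group_action G UNIV \<phi>" "proper_action G \<phi>" "proper_space TYPE('a)"
    and "H \<subseteq> carrier G" "infinite H"
  shows "\<exists>h\<in>H. R < dist x0 (\<phi> h x0)"
proof (rule ccontr)
  assume "\<not> ?thesis"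
  then have "H \<subseteq> {h \<in> carrier G. dist (\<phi> h x0) x0 \<le> R}"
    using assms(4) by (auto simp: dist_commute not_less)
  then show False
    using proper_action_finite_displacement[OF assms(1-3)] assms(5) finite_subset by blast
qed

lemma cocompact_action_cobounded_orbit:
  fixes G (structure) and \<phi> :: "'g \<Rightarrow> 'a::metric_space \<Rightarrow> 'a"
  assumes "isometric_action G \<phi>" "cocompact_action G \<phi>"
  obtains D where "\<And>y. \<exists>h\<in>carrier G. dist y (\<phi> h x0) \<le> D"
proof -
  obtain K where "compact K" and cover: "(\<Union>h\<in>carrier G. \<phi> h ` K) = UNIV"
    using assms(2) unfolding cocompact_action_def by blast
  then obtain D where D: "\<And>k. k \<in> K \<Longrightarrow> dist x0 k \<le> D"
    using bounded_any_center[of K x0] compact_imp_bounded by blast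
  have "\<exists>h\<in>carrier G. dist y (\<phi> h x0) \<le> D" for y
  proof -
    obtain h k where "h \<in> carrier G" "k \<in> K" "y = \<phi> h k"
      using cover by blast
    moreover have "dist (\<phi> h k) (\<phi> h x0) = dist x0 k"
      using assms(1) \<open>h \<in> carrier G\<close> unfolding isometric_action_def by (simp add: dist_commute)
    ultimately show ?thesis using D by metis
  qed
  then show thesis by (rule that)
qed

lemma (in group) conjugate_eq_imp_commute:
  assumes "a \<in> carrier G" "b \<in> carrier G" "g \<in> carrier G"
    and "inv a \<otimes> g \<otimes> a = inv b \<otimes> g \<otimes> b"
  shows "g \<otimes> (b \<otimes> inv a) = (b \<otimes> inv a) \<otimes> g"
proof -
  have "g \<otimes> (b \<otimes> inv a) = b \<otimes> (inv b \<otimes> g \<otimes> b) \<otimes> inv a"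
    using assms(1-3) by (simp add: m_assoc[symmetric])
  also have "\<dots> = b \<otimes> (inv a \<otimes> g \<otimes> a) \<otimes> inv a" by (simp add: assms(4))
  also have "\<dots> = (b \<otimes> inv a) \<otimes> g" using assms(1-3) by (simp add: m_assoc)
  finally show ?thesis .
qed

lemma (in group) infinite_centralizer_if_finitely_many_conjugates:
  assumes "g \<in> carrier G" "A \<subseteq> carrier G" "infinite A"
    and "finite ((\<lambda>k. inv k \<otimes> g \<otimes> k) ` A)"
  shows "infinite (centralizer_of G g)"
proof -
  obtain h0 where "h0 \<in> A"
    and inf: "infinite {k \<in> A. inv k \<otimes> g \<otimes> k = inv h0 \<otimes> g \<otimes> h0}" (is "infinite ?B")
    using pigeonhole_infinite[OF assms(3,4)] by blast
  have h0: "h0 \<in> carrier G" using \<open>h0 \<in> A\<close> assms(2) by blast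
  have "inj_on (\<lambda>k. h0 \<otimes> inv k) ?B"
  proof (rule inj_onI)
    fix x y assume "x \<in> ?B" "y \<in> ?B" "h0 \<otimes> inv x = h0 \<otimes> inv y"
    moreover have "x \<in> carrier G" "y \<in> carrier G" using \<open>x \<in> ?B\<close> \<open>y \<in> ?B\<close> assms(2) by auto
    ultimately have "inv x = inv y" using h0 Units_l_cancel[of h0 "inv x" "inv y"] by simp
    then show "x = y" using \<open>x \<in> carrier G\<close> \<open>y \<in> carrier G\<close> by (metis inv_inv)
  qed
  moreover have "(\<lambda>k. h0 \<otimes> inv k) ` ?B \<subseteq> centralizer_of G g"
    using assms(1,2) h0 conjugate_eq_imp_commute unfolding centralizer_of_def by auto
  ultimately show ?thesis
    using inf finite_imageD finite_subset by blast
qed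

section \<open>Convexity of the displacement in CAT(0) spaces\<close>

lemma geodesic_segment_reverse:
  assumes "geodesic_segment c x y"
  shows "geodesic_segment (\<lambda>t. c (dist x y - t)) y x"
  using assms unfolding geodesic_segment_def
  by (auto simp: dist_commute abs_minus_commute)

lemma geodesic_segment_isometry_image:
  assumes "geodesic_segment c x y" "\<And>u v. dist (f u) (f v) = dist u v"
  shows "geodesic_segment (f \<circ> c) (f x) (f y)"
  using assms unfolding geodesic_segment_def by auto

lemma comparison_triangle_exists:
  fixes a b c :: real
  assumes "0 \<le> a" "0 \<le> b" "0 \<le> c" "a \<le> b + c" "b \<le> a + c" "c \<le> a + b"
  shows "\<exists>x' y' z' :: complex. dist x' y' = a \<and> dist y' z' = b \<and> dist z' x' = c"
proof (cases "a = 0")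
  case True
  then show ?thesis using assms
    by (intro exI[of _ 0] exI[of _ "complex_of_real c"]) (simp add: dist_norm)
next
  case False
  then have "a > 0" using assms by simp
  \<comment> \<open>put x' = 0, y' = a and z' = p + iq, where p is given by the law of cosines\<close>
  define p where "p = (a\<^sup>2 + c\<^sup>2 - b\<^sup>2) / (2 * a)"
  have "\<bar>a - c\<bar> \<le> b" "b \<le> a + c" using assms by linarith+
  then have "(a - c)\<^sup>2 \<le> b\<^sup>2" "b\<^sup>2 \<le> (a + c)\<^sup>2"
    by (metis abs_le_square_iff abs_of_nonneg assms(2), intro power_mono) (use assms in auto)
  then have "\<bar>a\<^sup>2 + c\<^sup>2 - b\<^sup>2\<bar> \<le> 2 * a * c"
    by (simp add: power2_eq_square algebra_simps abs_le_iff)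
  then have "\<bar>p\<bar> \<le> c"
    unfolding p_def using \<open>a > 0\<close> by (simp add: abs_div divide_le_eq mult.commute mult.left_commute)
  then have "p\<^sup>2 \<le> c\<^sup>2" using assms by (metis abs_le_square_iff abs_of_nonneg)
  define q where "q = sqrt (c\<^sup>2 - p\<^sup>2)"
  have q2: "q\<^sup>2 = c\<^sup>2 - p\<^sup>2" unfolding q_def using \<open>p\<^sup>2 \<le> c\<^sup>2\<close> by simp
  have "(p - a)\<^sup>2 + q\<^sup>2 = b\<^sup>2"
    unfolding q2 p_def using \<open>a > 0\<close> by (simp add: power2_eq_square field_simps)
  then have "dist (complex_of_real a) (Complex p q) = b"
    using assms by (simp add: dist_norm complex_norm cmod_def power2_commute)
  moreover have "dist (Complex p q) 0 = c"
    using q2 assms by (simp add: dist_norm complex_norm)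
  ultimately show ?thesis
    using assms by (intro exI[of _ 0] exI[of _ "complex_of_real a"] exI[of _ "Complex p q"]) simp
qed

lemma cmp_pt_scaled:
  assumes "dist a b = L"
  shows "cmp_pt a b L (l * L) = a + complex_of_real l * (b - a)"
  using assms unfolding cmp_pt_def by (cases "L = 0") auto

lemma CAT0_comparison:
  fixes x y z :: "'a::metric_space"
  assumes "CAT0_space TYPE('a)"
    and "geodesic_segment c1 x y" "geodesic_segment c2 y z" "geodesic_segment c3 z x"
    and "dist x' y' = dist x y" "dist y' z' = dist y z" "dist z' x' = dist z x"
    and "s \<in> {0..dist x y}" "t \<in> {0..dist z x}"
  shows "dist (c1 s) (c3 t) \<le> dist (cmp_pt x' y' (dist x y) s) (cmp_pt z' x' (dist z x) t)"
proof -
  have "let S = {(c1, x', y', dist x y), (c2, y', z', dist y z), (c3, z', x', dist z x)} in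
        \<forall>(c, a, b, L)\<in>S. \<forall>(c', a2, b2, L2)\<in>S. \<forall>s\<in>{0..L}. \<forall>t\<in>{0..L2}.
          dist (c s) (c' t) \<le> dist (cmp_pt a b L s) (cmp_pt a2 b2 L2 t)"
    using assms(1-7) unfolding CAT0_space_def by blast
  then show ?thesis using assms(8,9) unfolding Let_def by blast
qed

lemma CAT0_comparison_at_vertex:
  fixes x y z :: "'a::metric_space"
  assumes cat: "CAT0_space TYPE('a)"
    and c: "geodesic_segment c x y" and d: "geodesic_segment d x z"
    and l: "0 \<le> l" "l \<le> 1"
  shows "dist (c (l * dist x y)) (d (l * dist x z)) \<le> l * dist y z"
proof -
  obtain e where e: "geodesic_segment e y z"
    using cat unfolding CAT0_space_def geodesic_space_def by blast
  obtain x' y' z' :: complex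
    where cmp: "dist x' y' = dist x y" "dist y' z' = dist y z" "dist z' x' = dist z x"
    using comparison_triangle_exists[of "dist x y" "dist y z" "dist z x"]
    by (metis dist_commute dist_triangle zero_le_dist add.commute)
  have "dist (c (l * dist x y)) ((\<lambda>t. d (dist x z - t)) ((1 - l) * dist z x))
      \<le> dist (cmp_pt x' y' (dist x y) (l * dist x y)) (cmp_pt z' x' (dist z x) ((1 - l) * dist z x))"
    using l by (intro CAT0_comparison[OF cat c e geodesic_segment_reverse[OF d] cmp])
      (auto simp: dist_commute mult_left_le_one_le)
  also have "\<dots> = dist (x' + complex_of_real l * (y' - x')) (z' + complex_of_real (1 - l) * (x' - z'))"
    by (simp only: cmp_pt_scaled cmp)
  also have "\<dots> = norm (complex_of_real l * (y' - z'))"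
    by (simp add: dist_norm algebra_simps)
  also have "\<dots> = l * dist y z"
    using l cmp(2) by (simp add: dist_norm norm_mult)
  finally show ?thesis by (simp add: dist_commute algebra_simps)
qed

lemma CAT0_dist_geodesics_convex:
  fixes x y x' y' :: "'a::metric_space"
  assumes cat: "CAT0_space TYPE('a)"
    and c: "geodesic_segment c x y" and c': "geodesic_segment c' x' y'"
    and len: "dist x' y' = dist x y" and l: "0 \<le> l" "l \<le> 1"
  shows "dist (c (l * dist x y)) (c' (l * dist x y)) \<le> (1 - l) * dist x x' + l * dist y y'"
proof -
  obtain d where d: "geodesic_segment d x y'"
    using cat unfolding CAT0_space_def geodesic_space_def by blast
  have "dist (c (l * dist x y)) (d (l * dist x y')) \<le> l * dist y y'"
    by (rule CAT0_comparison_at_vertex[OF cat c d l])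
  moreover have "dist (d (dist x y' - (1 - l) * dist y' x)) (c' (dist x' y' - (1 - l) * dist y' x'))
      \<le> (1 - l) * dist x x'"
    using CAT0_comparison_at_vertex[OF cat geodesic_segment_reverse[OF d]
        geodesic_segment_reverse[OF c'], of "1 - l"] l by simp
  then have "dist (d (l * dist x y')) (c' (l * dist x y)) \<le> (1 - l) * dist x x'"
    using len by (simp add: dist_commute algebra_simps)
  ultimately show ?thesis
    using dist_triangle[of "c (l * dist x y)" "c' (l * dist x y)" "d (l * dist x y')"] by simp
qed

lemma CAT0_displacement_on_segment:
  fixes x y :: "'a::metric_space"
  assumes cat: "CAT0_space TYPE('a)" and f: "\<And>u v. dist (f u) (f v) = dist u v"
    and c: "geodesic_segment c x y"
    and "dist x (f x) \<le> C" "dist y (f y) \<le> C" and t: "0 \<le> t" "t \<le> dist x y"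
  shows "dist (c t) (f (c t)) \<le> C"
proof (cases "x = y")
  case True
  then show ?thesis using c t assms(4) unfolding geodesic_segment_def by simp
next
  case False
  define l where "l = t / dist x y"
  have l: "0 \<le> l" "l \<le> 1" and t_eq: "t = l * dist x y"
    using t False unfolding l_def by auto
  have "dist (c (l * dist x y)) ((f \<circ> c) (l * dist x y)) \<le> (1 - l) * dist x (f x) + l * dist y (f y)"
    by (rule CAT0_dist_geodesics_convex[OF cat c geodesic_segment_isometry_image[OF c f] f l])
  then have "dist (c t) (f (c t)) \<le> (1 - l) * dist x (f x) + l * dist y (f y)"
    by (simp add: t_eq)
  also have "\<dots> \<le> (1 - l) * C + l * C"
    using l assms(4,5) by (intro add_mono mult_left_mono) auto
  finally show ?thesis by (simp add: algebra_simps)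
qed

section \<open>Limits of geodesic segments\<close>

lemma isometry_tendsto:
  assumes "\<And>u v. dist (f u) (f v) = dist u v" "X \<longlonglongrightarrow> l"
  shows "(\<lambda>n. f (X n)) \<longlonglongrightarrow> f l"
proof -
  have "(\<lambda>n. dist (f (X n)) (f l)) \<longlonglongrightarrow> 0"
    using tendsto_dist_iff[THEN iffD1, OF assms(2)] by (simp only: assms(1))
  then show ?thesis by (rule tendsto_dist_iff[THEN iffD2])
qed

lemma proper_space_Cauchy_convergent:
  fixes X :: "nat \<Rightarrow> 'a::metric_space"
  assumes "proper_space TYPE('a)" "Cauchy X"
  shows "convergent X"
proof -
  obtain r where "\<forall>y\<in>range X. dist (X 0) y \<le> r"
    using cauchy_imp_bounded[OF assms(2)] bounded_any_center by blast
  then have "\<forall>n. X n \<in> cball (X 0) r" by simp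
  moreover have "complete (cball (X 0) r)"
    using assms(1) unfolding proper_space_def by (simp add: compact_imp_complete)
  ultimately show ?thesis
    using assms(2) unfolding complete_def convergent_def by blast
qed

lemma proper_space_diagonal_subseq:
  fixes f :: "nat \<Rightarrow> nat \<Rightarrow> 'a::metric_space"
  assumes "proper_space TYPE('a)" "\<And>i n. f i n \<in> cball x0 (R i)"
  obtains k where "strict_mono k" "\<And>i. convergent (\<lambda>n. f i (k n))"
proof -
  define P where "P i s \<longleftrightarrow> convergent (\<lambda>n. f i (s n))" for i and s :: "nat \<Rightarrow> nat"
  interpret subseqs P
  proof
    fix i and s :: "nat \<Rightarrow> nat"
    have "seq_compact (cball x0 (R i))"
      using assms(1) unfolding proper_space_def by (simp add: compact_imp_seq_compact)
    moreover have "\<forall>n. f i (s n) \<in> cball x0 (R i)" using assms(2) by blast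
    ultimately obtain l r where "strict_mono r" "((\<lambda>n. f i (s n)) \<circ> r) \<longlonglongrightarrow> l"
      by (rule seq_compactE)
    then show "\<exists>r. strict_mono r \<and> P i (s \<circ> r)"
      unfolding P_def convergent_def o_def by blast
  qed
  have "P i (diagseq \<circ> ((+) (Suc i)))" for i
  proof (rule diagseq_holds)
    show "P j (s \<circ> r)" if r: "strict_mono r" and s: "P j s" for r s j
    proof -
      obtain l where "(\<lambda>n. f j (s n)) \<longlonglongrightarrow> l" using s unfolding P_def convergent_def by blast
      from LIMSEQ_subseq_LIMSEQ[OF this r] show ?thesis
        unfolding P_def convergent_def o_def by blast
    qed
  qed
  have "convergent (\<lambda>n. f i (diagseq n))" for i
  proof -
    obtain l where "(\<lambda>n. f i (diagseq (Suc i + n))) \<longlonglongrightarrow> l"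
      using \<open>P i (diagseq \<circ> ((+) (Suc i)))\<close> unfolding P_def convergent_def o_def by blast
    then have "(\<lambda>n. f i (diagseq (n + Suc i))) \<longlonglongrightarrow> l" by (simp add: add.commute)
    then show ?thesis unfolding convergent_def by (blast intro: LIMSEQ_offset)
  qed
  with subseq_diagseq show thesis by (rule that)
qed

lemma Cauchy_if_uniformly_approximated:
  fixes X :: "nat \<Rightarrow> 'a::metric_space"
  assumes "\<And>e. e > 0 \<Longrightarrow> \<exists>Y. Cauchy Y \<and> (\<forall>n. dist (X n) (Y n) < e)"
  shows "Cauchy X"
proof (rule metric_CauchyI)
  fix e :: real assume "e > 0"
  then obtain Y where "Cauchy Y" and Y: "\<And>n. dist (X n) (Y n) < e / 3"
    using assms[of "e / 3"] by auto
  then obtain M where M: "\<And>m n. M \<le> m \<Longrightarrow> M \<le> n \<Longrightarrow> dist (Y m) (Y n) < e / 3"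
    using metric_CauchyD[of Y "e / 3"] \<open>e > 0\<close> by auto
  have "dist (X m) (X n) < e" if "M \<le> m" "M \<le> n" for m n
    by (rule dist_triangle_third[OF Y[of m] M[OF that]]) (use Y[of n] in \<open>simp add: dist_commute\<close>)
  then show "\<exists>M. \<forall>m\<ge>M. \<forall>n\<ge>M. dist (X m) (X n) < e" by blast
qed

lemma lipschitz_family_convergent_subseq:
  fixes \<sigma> :: "nat \<Rightarrow> real \<Rightarrow> 'a::metric_space"
  assumes proper: "proper_space TYPE('a)"
    and lip: "\<And>n s t. dist (\<sigma> n s) (\<sigma> n t) \<le> \<bar>s - t\<bar>"
    and base: "\<And>n. \<sigma> n 0 = x0"
  obtains k where "strict_mono k" "\<And>t. convergent (\<lambda>n. \<sigma> (k n) t)"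
proof -
  define q where "q = from_nat_into (\<rat> :: real set)"
  have range_q: "range q = \<rat>"
    unfolding q_def using Rats_0 by (intro range_from_nat_into countable_rat) blast
  have "\<sigma> n (q i) \<in> cball x0 \<bar>q i\<bar>" for n i
    using lip[of n 0 "q i"] by (simp add: base)
  then obtain k where k: "strict_mono k" "\<And>i. convergent (\<lambda>n. \<sigma> (k n) (q i))"
    by (rule proper_space_diagonal_subseq[OF proper, of "\<lambda>i n. \<sigma> n (q i)"]) blast
  \<comment> \<open>the rational values are dense, and every \<sigma> n is 1-Lipschitz\<close>
  have "Cauchy (\<lambda>n. \<sigma> (k n) t)" for t
  proof (rule Cauchy_if_uniformly_approximated)
    fix e :: real assume "e > 0"
    then obtain r where "r \<in> \<rat>" "t < r" "r < t + e / 2"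
      using Rats_dense_in_real[of t "t + e / 2"] by auto
    then obtain i where "q i = r" using range_q by (metis rangeE)
    then have "\<bar>t - q i\<bar> < e" using \<open>t < r\<close> \<open>r < t + e / 2\<close> \<open>e > 0\<close> by auto
    then have "dist (\<sigma> (k n) t) (\<sigma> (k n) (q i)) < e" for n
      using lip[of "k n" t "q i"] by linarith
    moreover have "Cauchy (\<lambda>n. \<sigma> (k n) (q i))"
      using k(2) by (rule convergent_Cauchy)
    ultimately show "\<exists>Y. Cauchy Y \<and> (\<forall>n. dist (\<sigma> (k n) t) (Y n) < e)" by blast
  qed
  then have "convergent (\<lambda>n. \<sigma> (k n) t)" for t
    by (rule proper_space_Cauchy_convergent[OF proper])
  with k(1) show thesis by (rule that)
qed

lemma geodesic_segment_clamped_lipschitz: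
  assumes "geodesic_segment c x y"
  shows "dist (c (max 0 (min s (dist x y)))) (c (max 0 (min t (dist x y)))) \<le> \<bar>s - t\<bar>"
proof -
  have clamp: "\<bar>max 0 (min s d) - max 0 (min t d)\<bar> \<le> \<bar>s - t\<bar>" if "0 \<le> d" for d :: real
    using that by (auto simp: abs_le_iff max_def min_def)
  have "dist (c (max 0 (min s (dist x y)))) (c (max 0 (min t (dist x y))))
      = \<bar>max 0 (min s (dist x y)) - max 0 (min t (dist x y))\<bar>"
    using assms unfolding geodesic_segment_def by simp
  also have "\<dots> \<le> \<bar>s - t\<bar>"
    using clamp[OF zero_le_dist] .
  finally show ?thesis .
qed

lemma geodesic_segments_limit_ray:
  fixes c :: "nat \<Rightarrow> real \<Rightarrow> 'a::metric_space"
  assumes proper: "proper_space TYPE('a)"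
    and c: "\<And>n. geodesic_segment (c n) x0 (p n)"
    and far: "filterlim (\<lambda>n. dist x0 (p n)) at_top sequentially"
  obtains \<rho> k where "strict_mono k" "geodesic_ray \<rho>"
    "\<And>t. 0 \<le> t \<Longrightarrow> (\<lambda>n. c (k n) t) \<longlonglongrightarrow> \<rho> t"
proof -
  define L where "L n = dist x0 (p n)" for n
  define \<sigma> where "\<sigma> n t = c n (max 0 (min t (L n)))" for n t
  have c_iso: "dist (c n s) (c n t) = \<bar>s - t\<bar>" if "s \<in> {0..L n}" "t \<in> {0..L n}" for n s t
    using c[of n] that unfolding geodesic_segment_def L_def by blast
  have "dist (\<sigma> n s) (\<sigma> n t) \<le> \<bar>s - t\<bar>" for n s t
    unfolding \<sigma>_def L_def by (rule geodesic_segment_clamped_lipschitz[OF c])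
  moreover have "\<sigma> n 0 = x0" for n
    using c[of n] unfolding \<sigma>_def L_def geodesic_segment_def by simp
  ultimately obtain k where k: "strict_mono k" "\<And>t. convergent (\<lambda>n. \<sigma> (k n) t)"
    using lipschitz_family_convergent_subseq[OF proper] by metis
  define \<rho> where "\<rho> t = lim (\<lambda>n. \<sigma> (k n) t)" for t
  have "filterlim (\<lambda>n. L (k n)) at_top sequentially"
    using filterlim_compose[OF far filterlim_subseq[OF k(1)]] by (simp add: L_def o_def)
  then have eventually_inside: "\<forall>\<^sub>F n in sequentially. t \<le> L (k n)" for t
    by (simp add: filterlim_at_top)
  have eventually_eq: "\<forall>\<^sub>F n in sequentially. \<sigma> (k n) t = c (k n) t" if "0 \<le> t" for t
    using eventually_inside[of t] by eventually_elim (use that in \<open>simp add: \<sigma>_def\<close>)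
  have conv: "(\<lambda>n. c (k n) t) \<longlonglongrightarrow> \<rho> t" if "0 \<le> t" for t
    using k(2)[of t] eventually_eq[OF that] unfolding \<rho>_def convergent_LIMSEQ_iff
    by (rule Lim_transform_eventually)
  have ray: "geodesic_ray \<rho>"
    unfolding geodesic_ray_def
  proof (intro allI impI)
    fix s t :: real assume "0 \<le> s" "0 \<le> t"
    have "(\<lambda>n. dist (c (k n) s) (c (k n) t)) \<longlonglongrightarrow> dist (\<rho> s) (\<rho> t)"
      using conv \<open>0 \<le> s\<close> \<open>0 \<le> t\<close> by (intro tendsto_dist)
    moreover have "\<forall>\<^sub>F n in sequentially. dist (c (k n) s) (c (k n) t) = \<bar>s - t\<bar>"
      using eventually_inside[of s] eventually_inside[of t]
      by eventually_elim (use \<open>0 \<le> s\<close> \<open>0 \<le> t\<close> c_iso in auto)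
    ultimately show "dist (\<rho> s) (\<rho> t) = \<bar>s - t\<bar>"
      using tendsto_eventually LIMSEQ_unique Lim_transform_eventually by metis
  qed
  from that k(1) ray conv show thesis .
qed

section \<open>Fixed points at infinity\<close>

lemma asymptotic_refl: "asymptotic \<xi> \<xi>"
  unfolding asymptotic_def by auto

lemma asymptotic_sym: "asymptotic \<xi> \<eta> \<Longrightarrow> asymptotic \<eta> \<xi>"
  unfolding asymptotic_def by (simp add: dist_commute)

lemma asymptotic_trans:
  assumes "asymptotic \<xi> \<eta>" "asymptotic \<eta> \<zeta>"
  shows "asymptotic \<xi> \<zeta>"
proof -
  obtain C D where C: "\<And>t. t \<ge> 0 \<Longrightarrow> dist (\<xi> t) (\<eta> t) \<le> C"
    and D: "\<And>t. t \<ge> 0 \<Longrightarrow> dist (\<eta> t) (\<zeta> t) \<le> D"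
    using assms unfolding asymptotic_def by blast
  have "dist (\<xi> t) (\<zeta> t) \<le> C + D" if "t \<ge> 0" for t
    using dist_triangle[of "\<xi> t" "\<zeta> t" "\<eta> t"] C[OF that] D[OF that] by linarith
  then show ?thesis unfolding asymptotic_def by blast
qed

lemma asymptotic_isometry_image:
  assumes "asymptotic \<xi> \<eta>" "\<And>u v. dist (f u) (f v) = dist u v"
  shows "asymptotic (f \<circ> \<xi>) (f \<circ> \<eta>)"
  using assms unfolding asymptotic_def by simp

lemma geodesic_ray_isometry_image:
  assumes "geodesic_ray \<xi>" "\<And>u v. dist (f u) (f v) = dist u v"
  shows "geodesic_ray (f \<circ> \<xi>)"
  using assms unfolding geodesic_ray_def by simp

lemma asymptotic_class_invariant:
  fixes f :: "'a::metric_space \<Rightarrow> 'a"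
  assumes iso: "\<And>u v. dist (f u) (f v) = dist u v" and "surj f"
    and f\<xi>: "asymptotic \<xi> (f \<circ> \<xi>)"
  shows "bd_act f {\<eta>. geodesic_ray \<eta> \<and> asymptotic \<xi> \<eta>} = {\<eta>. geodesic_ray \<eta> \<and> asymptotic \<xi> \<eta>}"
    (is "bd_act f ?\<alpha> = ?\<alpha>")
proof -
  define f' where "f' = inv_into UNIV f"
  have "inj f" using iso by (metis dist_eq_0_iff injI)
  then have f'_f: "f' \<circ> (f \<circ> \<eta>) = \<eta>" for \<eta>
    by (simp add: f'_def fun_eq_iff)
  have f_f': "f \<circ> (f' \<circ> \<eta>) = \<eta>" for \<eta>
    using \<open>surj f\<close> by (simp add: f'_def fun_eq_iff surj_f_inv_f)
  have iso': "dist (f' u) (f' v) = dist u v" for u v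
    using iso[of "f' u" "f' v"] \<open>surj f\<close> by (simp add: f'_def surj_f_inv_f)
  have "f \<circ> \<eta> \<in> ?\<alpha>" if "\<eta> \<in> ?\<alpha>" for \<eta>
    using that f\<xi> asymptotic_isometry_image[OF _ iso] geodesic_ray_isometry_image[OF _ iso]
    by (blast intro: asymptotic_trans)
  moreover have "\<eta> \<in> (\<lambda>\<zeta>. f \<circ> \<zeta>) ` ?\<alpha>" if "\<eta> \<in> ?\<alpha>" for \<eta>
  proof -
    have "asymptotic (f \<circ> \<xi>) \<eta>"
      using that f\<xi> by (blast intro: asymptotic_trans asymptotic_sym)
    then have "asymptotic \<xi> (f' \<circ> \<eta>)"
      using asymptotic_isometry_image[OF _ iso'] f'_f by metis
    then have "f' \<circ> \<eta> \<in> ?\<alpha>"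
      using that geodesic_ray_isometry_image[OF _ iso'] by blast
    then show ?thesis using f_f' by (metis image_eqI)
  qed
  ultimately show ?thesis unfolding bd_act_def by blast
qed

lemma boundary_fixed_set_nonempty_iff:
  fixes f :: "'a::metric_space \<Rightarrow> 'a"
  assumes "\<And>u v. dist (f u) (f v) = dist u v" and "surj f"
  shows "boundary_fixed_set f \<noteq> {} \<longleftrightarrow> (\<exists>\<xi>. geodesic_ray \<xi> \<and> asymptotic \<xi> (f \<circ> \<xi>))"
proof
  assume "boundary_fixed_set f \<noteq> {}"
  then obtain \<xi> where "geodesic_ray \<xi>"
    and "bd_act f {\<eta>. geodesic_ray \<eta> \<and> asymptotic \<xi> \<eta>} = {\<eta>. geodesic_ray \<eta> \<and> asymptotic \<xi> \<eta>}"
    unfolding boundary_fixed_set_def visual_boundary_def by blast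
  then have "f \<circ> \<xi> \<in> {\<eta>. geodesic_ray \<eta> \<and> asymptotic \<xi> \<eta>}"
    unfolding bd_act_def using asymptotic_refl by blast
  with \<open>geodesic_ray \<xi>\<close> show "\<exists>\<xi>. geodesic_ray \<xi> \<and> asymptotic \<xi> (f \<circ> \<xi>)" by blast
next
  assume "\<exists>\<xi>. geodesic_ray \<xi> \<and> asymptotic \<xi> (f \<circ> \<xi>)"
  then obtain \<xi> where "geodesic_ray \<xi>" "asymptotic \<xi> (f \<circ> \<xi>)" by blast
  then show "boundary_fixed_set f \<noteq> {}"
    using asymptotic_class_invariant[OF assms] unfolding boundary_fixed_set_def visual_boundary_def
    by blast
qed

lemma geodesic_ray_unbounded:
  assumes "geodesic_ray \<xi>"
  shows "\<not> bounded (range (\<lambda>n::nat. \<xi> (real n)))"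
proof
  assume "bounded (range (\<lambda>n::nat. \<xi> (real n)))"
  then obtain B where "\<forall>y\<in>range (\<lambda>n::nat. \<xi> (real n)). dist (\<xi> 0) y \<le> B"
    using bounded_any_center by blast
  then have B: "dist (\<xi> 0) (\<xi> (real n)) \<le> B" for n :: nat by blast
  obtain n :: nat where "B < n" using reals_Archimedean2 by blast
  moreover have "dist (\<xi> 0) (\<xi> (real n)) = real n"
    using assms unfolding geodesic_ray_def by simp
  ultimately show False using B[of n] by simp
qed

lemma infinite_range_if_close_to_unbounded:
  fixes X :: "nat \<Rightarrow> 'a::metric_space" and h :: "nat \<Rightarrow> 'b"
  assumes "\<And>n. dist (X n) (Y (h n)) \<le> D" "\<not> bounded (range X)"
  shows "infinite (range h)"
proof
  assume "finite (range h)"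
  then have "bounded (Y ` range h)" by (simp add: finite_imp_bounded)
  then obtain a B where B: "\<forall>y\<in>Y ` range h. dist a y \<le> B"
    unfolding bounded_def by blast
  have "dist a (X n) \<le> B + D" for n
  proof -
    have "dist a (Y (h n)) \<le> B" using B by blast
    then show ?thesis
      using dist_triangle[of a "X n" "Y (h n)"] assms(1)[of n] dist_commute[of "X n" "Y (h n)"]
      by linarith
  qed
  then have "bounded (range X)" unfolding bounded_def by blast
  with assms(2) show False ..
qed

lemma isometry_displacement_le:
  assumes "\<And>u v. dist (f u) (f v) = dist u v"
  shows "dist (f y) y \<le> dist (f x) x + 2 * dist x y"
  using dist_triangle[of "f y" y "f x"] dist_triangle[of "f x" y x] assms[of y x] dist_commute[of y x]
  by linarith

lemma CAT0_bounded_displacement_ray: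
  fixes f :: "'a::metric_space \<Rightarrow> 'a"
  assumes cat: "CAT0_space TYPE('a)" and proper: "proper_space TYPE('a)"
    and f: "\<And>u v. dist (f u) (f v) = dist u v"
    and "dist x0 (f x0) \<le> C" "\<And>n. dist (p n) (f (p n)) \<le> C"
    and far: "filterlim (\<lambda>n. dist x0 (p n)) at_top sequentially"
  shows "\<exists>\<xi>. geodesic_ray \<xi> \<and> asymptotic \<xi> (f \<circ> \<xi>)"
proof -
  have "\<forall>n. \<exists>c. geodesic_segment c x0 (p n)"
    using cat unfolding CAT0_space_def geodesic_space_def by blast
  from choice[OF this] obtain c where c: "\<And>n. geodesic_segment (c n) x0 (p n)"
    by blast
  obtain \<xi> k where "strict_mono k" "geodesic_ray \<xi>"
    and conv: "\<And>t. 0 \<le> t \<Longrightarrow> (\<lambda>n. c (k n) t) \<longlonglongrightarrow> \<xi> t"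
    by (rule geodesic_segments_limit_ray[OF proper c far]) blast
  have inside: "\<forall>\<^sub>F n in sequentially. t \<le> dist x0 (p (k n))" for t
    using filterlim_compose[OF far filterlim_subseq[OF \<open>strict_mono k\<close>]]
    by (simp add: filterlim_at_top o_def)
  have "dist (\<xi> t) (f (\<xi> t)) \<le> C" if "0 \<le> t" for t
  proof (rule tendsto_upperbound)
    show "(\<lambda>n. dist (c (k n) t) (f (c (k n) t))) \<longlonglongrightarrow> dist (\<xi> t) (f (\<xi> t))"
      using conv[OF that] isometry_tendsto[OF f] by (intro tendsto_dist)
    show "\<forall>\<^sub>F n in sequentially. C \<ge> dist (c (k n) t) (f (c (k n) t))"
      using inside[of t]
      by eventually_elim (rule CAT0_displacement_on_segment[OF cat f c assms(4,5) that])
  qed simp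
  then show ?thesis using \<open>geodesic_ray \<xi>\<close> unfolding asymptotic_def by auto
qed

lemma fixed_point_at_infinity_imp_infinite_centralizer:
  fixes G (structure) and \<phi> :: "'g \<Rightarrow> 'a::metric_space \<Rightarrow> 'a"
  assumes "group G" "proper_space TYPE('a)" "geometric_action G \<phi>" "g \<in> carrier G"
    and "boundary_fixed_set (\<phi> g) \<noteq> {}"
  shows "infinite (centralizer_of G g)"
proof -
  interpret group G by fact
  have isom: "isometric_action G \<phi>" and ga: "group_action G UNIV \<phi>"
    and pa: "proper_action G \<phi>" and cc: "cocompact_action G \<phi>"
    using assms(3) unfolding geometric_action_def isometric_action_def by auto
  obtain \<xi> where "geodesic_ray \<xi>" "asymptotic \<xi> (\<phi> g \<circ> \<xi>)"
    using assms(5) boundary_fixed_set_nonempty_iff[OF isometric_actionD[OF isom assms(4)]] by blast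
  then obtain C where C: "\<And>t. 0 \<le> t \<Longrightarrow> dist (\<phi> g (\<xi> t)) (\<xi> t) \<le> C"
    unfolding asymptotic_def by (auto simp: dist_commute)
  fix x0 :: 'a
  obtain D where "\<And>y. \<exists>h\<in>carrier G. dist y (\<phi> h x0) \<le> D"
    using cocompact_action_cobounded_orbit[OF isom cc] by blast
  then have "\<forall>n::nat. \<exists>h. h \<in> carrier G \<and> dist (\<xi> (real n)) (\<phi> h x0) \<le> D" by blast
  from choice[OF this] obtain h :: "nat \<Rightarrow> 'g"
    where "\<forall>n. h n \<in> carrier G \<and> dist (\<xi> (real n)) (\<phi> (h n) x0) \<le> D" by blast
  then have h: "\<And>n. h n \<in> carrier G" "\<And>n. dist (\<xi> (real n)) (\<phi> (h n) x0) \<le> D"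
    by blast+
  have "dist (\<phi> (inv (h n) \<otimes> g \<otimes> h n) x0) x0 \<le> C + 2 * D" for n
  proof -
    have "dist (\<phi> (inv (h n) \<otimes> g \<otimes> h n) x0) x0 = dist (\<phi> g (\<phi> (h n) x0)) (\<phi> (h n) x0)"
      by (rule isometric_action_conjugate_displacement[OF isom assms(4) h(1)])
    also have "\<dots> \<le> dist (\<phi> g (\<xi> n)) (\<xi> n) + 2 * dist (\<xi> n) (\<phi> (h n) x0)"
      by (rule isometry_displacement_le[OF isometric_actionD(1)[OF isom assms(4)]])
    also have "\<dots> \<le> C + 2 * D" using C[of "real n"] h(2)[of n] by simp
    finally show ?thesis .
  qed
  then have "(\<lambda>k. inv k \<otimes> g \<otimes> k) ` range h \<subseteq> {f \<in> carrier G. dist (\<phi> f x0) x0 \<le> C + 2 * D}"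
    using h(1) assms(4) by auto
  then have "finite ((\<lambda>k. inv k \<otimes> g \<otimes> k) ` range h)"
    using proper_action_finite_displacement[OF ga pa assms(2)] finite_subset by blast
  moreover have "infinite (range h)"
    using h(2) geodesic_ray_unbounded[OF \<open>geodesic_ray \<xi>\<close>] by (rule infinite_range_if_close_to_unbounded)
  ultimately show ?thesis
    using infinite_centralizer_if_finitely_many_conjugates[OF assms(4)] h(1) by blast
qed

lemma infinite_centralizer_imp_fixed_point_at_infinity:
  fixes G (structure) and \<phi> :: "'g \<Rightarrow> 'a::metric_space \<Rightarrow> 'a"
  assumes "CAT0_space TYPE('a)" "proper_space TYPE('a)" "geometric_action G \<phi>"
    and "g \<in> carrier G" "infinite (centralizer_of G g)"
  shows "boundary_fixed_set (\<phi> g) \<noteq> {}"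
proof -
  have isom: "isometric_action G \<phi>" and ga: "group_action G UNIV \<phi>" and pa: "proper_action G \<phi>"
    using assms(3) unfolding geometric_action_def isometric_action_def by auto
  fix x0 :: 'a
  have "centralizer_of G g \<subseteq> carrier G" unfolding centralizer_of_def by blast
  then have "\<forall>n::nat. \<exists>z. z \<in> centralizer_of G g \<and> real n < dist x0 (\<phi> z x0)"
    using proper_action_infinite_subset_unbounded[OF ga pa assms(2) _ assms(5)] by blast
  from choice[OF this] obtain z :: "nat \<Rightarrow> 'g"
    where z: "\<forall>n. z n \<in> centralizer_of G g \<and> real n < dist x0 (\<phi> (z n) x0)" by blast
  have "dist (\<phi> (z n) x0) (\<phi> g (\<phi> (z n) x0)) \<le> dist x0 (\<phi> g x0)" for n
    using isometric_action_commuting_displacement[OF isom assms(4)] z by simp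
  moreover have "filterlim (\<lambda>n. dist x0 (\<phi> (z n) x0)) at_top sequentially"
  proof (rule filterlim_at_top_mono[OF filterlim_real_sequentially])
    show "\<forall>\<^sub>F n in sequentially. real n \<le> dist x0 (\<phi> (z n) x0)"
      using z by (intro always_eventually allI less_imp_le) blast
  qed
  ultimately have "\<exists>\<xi>. geodesic_ray \<xi> \<and> asymptotic \<xi> (\<phi> g \<circ> \<xi>)"
    by (rule CAT0_bounded_displacement_ray[OF assms(1,2) isometric_actionD(1)[OF isom assms(4)] order_refl])
  then show ?thesis
    using boundary_fixed_set_nonempty_iff[OF isometric_actionD[OF isom assms(4)]] by blast
qed

theorem corollary1:
  fixes G :: "('g, 'b) monoid_scheme" and \<phi> :: "'g \<Rightarrow> 'a::metric_space \<Rightarrow> 'a" and g :: 'g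
  assumes "group G"
    and "CAT0_space TYPE('a)" and "proper_space TYPE('a)"
    and "geometric_action G \<phi>"
    and "g \<in> carrier G"
  shows "boundary_fixed_set (\<phi> g) \<noteq> {} \<longleftrightarrow> infinite (centralizer_of G g)"
  using fixed_point_at_infinity_imp_infinite_centralizer[OF assms(1,3,4,5)]
    infinite_centralizer_imp_fixed_point_at_infinity[OF assms(2-5)] by blast

end
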